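(* For every antisymmetric state $\rho_\mathcal{A}$ on $\mathbb{C}^d\otimes\mathbb{C}^d$ (i.e. $\rho_\mathcal{A}=P_\mathcal{A}\rho_\mathcal{A}P_\mathcal{A}$), it holds that $2/(d(d+1)+2)\leq p^\textrm{PPT}(\rho_\mathcal{A}) \leq 1/2$, where $p^\textrm{PPT}(\rho_\mathcal{A})$ is the optimal value of the semidefinite program: maximize $\operatorname{Tr}(P_\mathcal{A}\sigma)$ over $\sigma$ subject to $P_\mathcal{A}\sigma P_\mathcal{A} = \operatorname{Tr}(P_\mathcal{A}\sigma)\rho_\mathcal{A}$, $\sigma\geq 0$, $\operatorname{Tr}(\sigma)=1$, $\sigma^\Gamma\geq 0$.
   Context: Two $d$-dimensional systems $A,B$. $V$ is the swap operator, $P_\mathcal{S}=(\mathbb{1}+V)/2$ and $P_\mathcal{A}=(\mathbb{1}-V)/2$ are the projectors onto the symmetric and antisymmetric subspaces (with $\mathbb{1}$ the identity operator), of dimensions $d_\mathcal{S}=d(d+1)/2$ and $d_\mathcal{A}=d(d-1)/2$. $\sigma^\Gamma$ denotes the partial transpose of $\sigma$. *)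

theory Defs
  imports "Jordan_Normal_Form.Matrix" "Jordan_Normal_Form.Conjugate"
begin

text \<open>Operators on C^d (x) C^d are (d*d) x (d*d) complex matrices; the basis vector
  |a> (x) |b> (a, b < d) has index a*d + b.\<close>

definition mtrace :: "complex mat \<Rightarrow> complex" where
  "mtrace A = (\<Sum>i<dim_row A. A $$ (i,i))"

definition psd :: "nat \<Rightarrow> complex mat \<Rightarrow> bool" where
  "psd n M \<longleftrightarrow> M \<in> carrier_mat n n \<and>
     (\<forall>v \<in> carrier_vec n. Im (scalar_prod (conjugate v) (M *\<^sub>v v)) = 0
                          \<and> Re (scalar_prod (conjugate v) (M *\<^sub>v v)) \<ge> 0)"

definition swap_op :: "nat \<Rightarrow> complex mat" where
  "swap_op d = mat (d*d) (d*d) (\<lambda>(i,j). if i = (j mod d) * d + j div d then 1 else 0)"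

definition P_antisym :: "nat \<Rightarrow> complex mat" where
  "P_antisym d = (1/2 :: complex) \<cdot>\<^sub>m (1\<^sub>m (d*d) - swap_op d)"

definition P_sym :: "nat \<Rightarrow> complex mat" where
  "P_sym d = (1/2 :: complex) \<cdot>\<^sub>m (1\<^sub>m (d*d) + swap_op d)"

text \<open>Partial transpose (on the second factor):
  sigma^Gamma_{(a,b),(a',b')} = sigma_{(a,b'),(a',b)}.\<close>
definition partial_transpose :: "nat \<Rightarrow> complex mat \<Rightarrow> complex mat" where
  "partial_transpose d \<sigma> = mat (d*d) (d*d)
     (\<lambda>(i,j). \<sigma> $$ ((i div d) * d + j mod d, (j div d) * d + i mod d))"

definition is_state :: "nat \<Rightarrow> complex mat \<Rightarrow> bool" where
  "is_state n \<rho> \<longleftrightarrow> psd n \<rho> \<and> mtrace \<rho> = 1"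

definition ppt_feasible :: "nat \<Rightarrow> complex mat \<Rightarrow> complex mat \<Rightarrow> bool" where
  "ppt_feasible d \<rho> \<sigma> \<longleftrightarrow>
     P_antisym d * \<sigma> * P_antisym d = mtrace (P_antisym d * \<sigma>) \<cdot>\<^sub>m \<rho>
     \<and> psd (d*d) \<sigma> \<and> mtrace \<sigma> = 1 \<and> psd (d*d) (partial_transpose d \<sigma>)"

definition p_PPT :: "nat \<Rightarrow> complex mat \<Rightarrow> real" where
  "p_PPT d \<rho> = Sup {Re (mtrace (P_antisym d * \<sigma>)) | \<sigma>. ppt_feasible d \<rho> \<sigma>}"

end

theory Submission
  imports Defs "HOL-Analysis.L2_Norm"
begin

text \<open>
  Upper bound: \<open>Tr (P_antisym \<sigma>) = (1 - Tr (V \<sigma>)) / 2\<close>, and \<open>Tr (V \<sigma>) = \<langle>\<phi>|\<sigma>\<^sup>\<Gamma>|\<phi>\<rangle>\<close> for the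
  unnormalised maximally entangled vector \<open>\<phi> = \<Sum>\<^sub>a |a a\<rangle>\<close>, which is nonnegative when \<open>\<sigma>\<^sup>\<Gamma> \<ge> 0\<close>.

  Lower bound: \<open>\<sigma> = p (\<rho> + P_sym)\<close> with \<open>p = 2 / (d (d + 1) + 2)\<close> is feasible with value \<open>p\<close>.
  Indeed \<open>P_antisym\<close> kills \<open>P_sym\<close> and fixes \<open>\<rho>\<close>, \<open>Tr \<sigma> = p (1 + d\<^sub>S) = 1\<close>, and
  \<open>\<sigma>\<^sup>\<Gamma> = p (\<rho>\<^sup>\<Gamma> + P_sym\<^sup>\<Gamma>) \<ge> 0\<close> because \<open>P_sym\<^sup>\<Gamma> \<ge> 1/2\<close> while \<open>\<rho>\<^sup>\<Gamma> \<ge> -1/2\<close> for every state.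
  For the last fact write \<open>\<rho> = \<Sum>\<^sub>k |g\<^sub>k\<rangle>\<langle>g\<^sub>k|\<close> (Gram decomposition); for a pure state,
  \<open>\<langle>f|(|g\<rangle>\<langle>g|)\<^sup>\<Gamma>|f\<rangle> = \<Sum>\<^sub>a\<^sub>a\<^sub>' X\<^sub>a\<^sub>a\<^sub>' conj X\<^sub>a\<^sub>'\<^sub>a\<close> with \<open>X = G F\<^sup>T\<close>, which is at least
  \<open>-|X - X\<^sup>T|\<^sup>2 / 4\<close>; finally \<open>|X - X\<^sup>T| \<le> \<Sum>\<^sub>b |G\<^sub>b \<otimes> F\<^sub>b - F\<^sub>b \<otimes> G\<^sub>b| \<le> \<surd>2 \<Sum>\<^sub>b |G\<^sub>b| |F\<^sub>b| \<le> \<surd>2 |g| |f|\<close>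
  for the columns \<open>G\<^sub>b\<close>, \<open>F\<^sub>b\<close>, by Minkowski, Lagrange's identity and Cauchy-Schwarz.
\<close>

definition swap_idx :: "nat \<Rightarrow> nat \<Rightarrow> nat" where
  "swap_idx d i = (i mod d) * d + i div d"

lemma pair_idx_eq_iff:
  fixes a b a' b' d :: nat
  assumes "b < d" "b' < d"
  shows "a * d + b = a' * d + b' \<longleftrightarrow> a = a' \<and> b = b'"
proof
  assume h: "a * d + b = a' * d + b'"
  have "(a * d + b) div d = a" "(a' * d + b') div d = a'"
    "(a * d + b) mod d = b" "(a' * d + b') mod d = b'"
    using assms by auto
  then show "a = a' \<and> b = b'" using h by metis
qed simp

lemma pair_idx_less: "(a::nat) < d \<Longrightarrow> b < d \<Longrightarrow> a * d + b < d * d"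
proof -
  assume a: "a < d" and b: "b < d"
  have "a * d + b < (a + 1) * d" using b by simp
  also have "\<dots> \<le> d * d" using a by (intro mult_le_mono1) simp
  finally show ?thesis .
qed

lemma mixed_idx_less: "(i::nat) < d * d \<Longrightarrow> j < d * d \<Longrightarrow> (i div d) * d + j mod d < d * d"
proof -
  assume i: "i < d * d" and j: "j < d * d"
  then have "0 < d" by (cases d) auto
  with i show ?thesis by (intro pair_idx_less) (auto simp: less_mult_imp_div_less)
qed

lemma swap_idx_pair: "b < d \<Longrightarrow> swap_idx d (a * d + b) = b * d + a"
  unfolding swap_idx_def by simp

lemma swap_idx_less: "i < d * d \<Longrightarrow> swap_idx d i < d * d"
proof -
  assume i: "i < d * d"
  then have "0 < d" by (cases d) auto
  then show ?thesis
    unfolding swap_idx_def using i by (intro pair_idx_less) (auto simp: less_mult_imp_div_less)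
qed

lemma swap_idx_swap_idx: "i < d * d \<Longrightarrow> swap_idx d (swap_idx d i) = i"
  unfolding swap_idx_def[of d i] by (simp add: swap_idx_pair less_mult_imp_div_less)

lemma swap_idx_eq_iff: "i < d * d \<Longrightarrow> k < d * d \<Longrightarrow> i = swap_idx d k \<longleftrightarrow> k = swap_idx d i"
  using swap_idx_swap_idx by metis

lemma sum_pair_idx:
  fixes f :: "nat \<Rightarrow> 'a::comm_monoid_add"
  shows "(\<Sum>i<d * d. f i) = (\<Sum>a<d. \<Sum>b<d. f (a * d + b))"
proof -
  have "(\<Sum>i<d * d. f i) = (\<Sum>a<d. sum f {a * d..<a * d + d})"
    using sum.nat_group[of f d d] by simp
  also have "\<dots> = (\<Sum>a<d. \<Sum>b<d. f (a * d + b))"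
  proof (rule sum.cong[OF refl])
    fix a
    show "sum f {a * d..<a * d + d} = (\<Sum>b<d. f (a * d + b))"
      using sum.atLeastLessThan_shift_0[of f "a * d" "a * d + d"]
      by (simp add: atLeast0LessThan add.commute comp_def)
  qed
  finally show ?thesis .
qed

lemma sum_swap_idx: "(\<Sum>i<d * d. f (swap_idx d i)) = (\<Sum>i<d * d. f i)"
  by (rule sum.reindex_bij_witness[of _ "swap_idx d" "swap_idx d"])
    (auto simp: swap_idx_swap_idx swap_idx_less)

lemma sum_delta_pairs_left:
  "(\<Sum>a<(d::nat). \<Sum>b<d. \<Sum>a'<d. \<Sum>b'<d.
      if b = a then (if b' = a' then F a a' else 0) else (0::'a::comm_monoid_add))
   = (\<Sum>a<d. \<Sum>a'<d. F a a')"
proof (rule sum.cong[OF refl])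
  fix a assume "a \<in> {..<d}"
  moreover have "(\<Sum>a'<d. \<Sum>b'<d. if b = a then (if b' = a' then F a a' else 0) else 0)
     = (if b = a then (\<Sum>a'<d. F a a') else 0)" for b
    by (cases "b = a") simp_all
  ultimately show "(\<Sum>b<d. \<Sum>a'<d. \<Sum>b'<d. if b = a then (if b' = a' then F a a' else 0) else 0)
     = (\<Sum>a'<d. F a a')"
    by simp
qed

lemma sum_delta_pairs_right:
  "(\<Sum>a<(d::nat). \<Sum>b<d. \<Sum>a'<d. \<Sum>b'<d.
      if a' = a then (if b' = b then F a b else 0) else (0::'a::comm_monoid_add))
   = (\<Sum>a<d. \<Sum>b<d. F a b)"
proof (intro sum.cong refl)
  fix a b assume "a \<in> {..<d}" "b \<in> {..<d}"
  moreover have "(\<Sum>b'<d. if a' = a then (if b' = b then F a b else 0) else 0)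
     = (if a' = a then F a b else 0)" for a'
    using \<open>b \<in> {..<d}\<close> by simp
  ultimately show "(\<Sum>a'<d. \<Sum>b'<d. if a' = a then (if b' = b then F a b else 0) else 0) = F a b"
    by simp
qed

definition sesq_form :: "nat \<Rightarrow> (nat \<Rightarrow> nat \<Rightarrow> complex) \<Rightarrow> (nat \<Rightarrow> complex) \<Rightarrow> (nat \<Rightarrow> complex) \<Rightarrow> complex"
  where "sesq_form n H f g = (\<Sum>i<n. \<Sum>j<n. cnj (f i) * H i j * g j)"

abbreviation quad_form :: "nat \<Rightarrow> (nat \<Rightarrow> nat \<Rightarrow> complex) \<Rightarrow> (nat \<Rightarrow> complex) \<Rightarrow> complex"
  where "quad_form n H f \<equiv> sesq_form n H f f"

definition hermitian_form :: "nat \<Rightarrow> (nat \<Rightarrow> nat \<Rightarrow> complex) \<Rightarrow> bool"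
  where "hermitian_form n H \<longleftrightarrow> (\<forall>i<n. \<forall>j<n. H j i = cnj (H i j))"

definition psd_form :: "nat \<Rightarrow> (nat \<Rightarrow> nat \<Rightarrow> complex) \<Rightarrow> bool"
  where "psd_form n H \<longleftrightarrow> (\<forall>f. Im (quad_form n H f) = 0 \<and> 0 \<le> Re (quad_form n H f))"

abbreviation entries :: "complex mat \<Rightarrow> nat \<Rightarrow> nat \<Rightarrow> complex"
  where "entries A \<equiv> \<lambda>i j. A $$ (i, j)"

lemma sesq_form_add_left: "sesq_form n H (\<lambda>k. f k + g k) h = sesq_form n H f h + sesq_form n H g h"
  unfolding sesq_form_def by (simp add: algebra_simps sum.distrib)

lemma sesq_form_add_right: "sesq_form n H h (\<lambda>k. f k + g k) = sesq_form n H h f + sesq_form n H h g"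
  unfolding sesq_form_def by (simp add: algebra_simps sum.distrib)

lemma quad_form_add:
  "quad_form n H (\<lambda>k. f k + g k) = quad_form n H f + sesq_form n H f g + sesq_form n H g f + quad_form n H g"
  by (simp add: sesq_form_add_left sesq_form_add_right)

lemma sesq_form_delta_right:
  "j0 < n \<Longrightarrow> sesq_form n H f (\<lambda>k. if k = j0 then \<beta> else 0) = (\<Sum>i<n. cnj (f i) * H i j0) * \<beta>"
  unfolding sesq_form_def by (simp add: sum_distrib_right if_distrib cong: if_cong)

lemma sesq_form_delta_left:
  "i0 < n \<Longrightarrow> sesq_form n H (\<lambda>k. if k = i0 then \<alpha> else 0) g = cnj \<alpha> * (\<Sum>j<n. H i0 j * g j)"
proof -
  assume i0: "i0 < n"
  have "sesq_form n H (\<lambda>k. if k = i0 then \<alpha> else 0) g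
      = (\<Sum>i<n. if i = i0 then cnj \<alpha> * (\<Sum>j<n. H i j * g j) else 0)"
    unfolding sesq_form_def by (rule sum.cong) (auto simp: sum_distrib_left mult.assoc)
  then show ?thesis using i0 by simp
qed

lemma sesq_form_delta:
  "i0 < n \<Longrightarrow> j0 < n \<Longrightarrow>
   sesq_form n H (\<lambda>k. if k = i0 then \<alpha> else 0) (\<lambda>k. if k = j0 then \<beta> else 0) = cnj \<alpha> * H i0 j0 * \<beta>"
  by (simp add: sesq_form_delta_left if_distrib cong: if_cong)

lemma sesq_form_cong:
  "(\<And>i j. i < n \<Longrightarrow> j < n \<Longrightarrow> H i j = H' i j) \<Longrightarrow> (\<And>k. k < n \<Longrightarrow> f k = f' k) \<Longrightarrow>
   (\<And>k. k < n \<Longrightarrow> g k = g' k) \<Longrightarrow> sesq_form n H f g = sesq_form n H' f' g'"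
  unfolding sesq_form_def by (intro sum.cong) auto

lemma sesq_form_scale_add:
  "sesq_form n (\<lambda>i j. c * (H i j + K i j)) f g = c * (sesq_form n H f g + sesq_form n K f g)"
  unfolding sesq_form_def by (simp add: algebra_simps sum.distrib sum_distrib_left)

lemma sesq_form_sum: "sesq_form n (\<lambda>i j. \<Sum>k\<in>K. H k i j) f g = (\<Sum>k\<in>K. sesq_form n (H k) f g)"
proof -
  have "sesq_form n (\<lambda>i j. \<Sum>k\<in>K. H k i j) f g = (\<Sum>i<n. \<Sum>j<n. \<Sum>k\<in>K. cnj (f i) * H k i j * g j)"
    unfolding sesq_form_def by (simp add: sum_distrib_left sum_distrib_right)
  also have "\<dots> = (\<Sum>i<n. \<Sum>k\<in>K. \<Sum>j<n. cnj (f i) * H k i j * g j)"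
    by (rule sum.cong[OF refl], rule sum.swap)
  also have "\<dots> = (\<Sum>k\<in>K. \<Sum>i<n. \<Sum>j<n. cnj (f i) * H k i j * g j)"
    by (rule sum.swap)
  finally show ?thesis unfolding sesq_form_def .
qed

lemma sesq_form_pair_idx:
  "sesq_form (d * d) H f g = (\<Sum>a<d. \<Sum>b<d. \<Sum>a'<d. \<Sum>b'<d.
     cnj (f (a * d + b)) * H (a * d + b) (a' * d + b') * g (a' * d + b'))"
  unfolding sesq_form_def by (simp only: sum_pair_idx)

lemma quad_form_mat:
  assumes "A \<in> carrier_mat n n" "v \<in> carrier_vec n"
  shows "scalar_prod (conjugate v) (A *\<^sub>v v) = quad_form n (entries A) (\<lambda>i. v $ i)"
  using assms unfolding sesq_form_def scalar_prod_def
  by (simp add: atLeast0LessThan sum_distrib_left mult.assoc scalar_prod_def)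

lemma psd_iff_psd_form: "psd n A \<longleftrightarrow> A \<in> carrier_mat n n \<and> psd_form n (entries A)"
proof -
  have vec: "quad_form n (entries A) f = quad_form n (entries A) (\<lambda>i. vec n f $ i)" for f
    by (rule sesq_form_cong) auto
  show ?thesis
  proof
    assume "psd n A"
    then show "A \<in> carrier_mat n n \<and> psd_form n (entries A)"
      unfolding psd_def psd_form_def using vec quad_form_mat by (metis vec_carrier)
  next
    assume "A \<in> carrier_mat n n \<and> psd_form n (entries A)"
    then show "psd n A"
      unfolding psd_def psd_form_def using quad_form_mat by auto
  qed
qed

lemma hermitian_if_psd_form:
  assumes "psd_form n H"
  shows "hermitian_form n H"
  unfolding hermitian_form_def
proof (intro allI impI)
  fix i j assume i: "i < n" and j: "j < n"
  define e :: "nat \<Rightarrow> complex \<Rightarrow> nat \<Rightarrow> complex" where "e = (\<lambda>a c k. if k = a then c else 0)"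
  have im: "Im (quad_form n H f) = 0" for f using assms unfolding psd_form_def by blast
  have diag: "Im (H a a) = 0" if a: "a < n" for a
    using im[of "e a 1"] sesq_form_delta[OF a a, of H 1 1] unfolding e_def by simp
  have "quad_form n H (\<lambda>k. e i 1 k + e j 1 k) = H i i + H i j + H j i + H j j"
    "quad_form n H (\<lambda>k. e i 1 k + e j \<i> k) = H i i + \<i> * H i j - \<i> * H j i + H j j"
    unfolding quad_form_add e_def
    using sesq_form_delta[OF i i, of H] sesq_form_delta[OF i j, of H]
      sesq_form_delta[OF j i, of H] sesq_form_delta[OF j j, of H]
    by (simp_all add: algebra_simps)
  then have "Im (H i j) + Im (H j i) = 0" "Re (H i j) - Re (H j i) = 0"
    using im[of "\<lambda>k. e i 1 k + e j 1 k"] im[of "\<lambda>k. e i 1 k + e j \<i> k"] diag[OF i] diag[OF j]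
    by simp_all
  then show "H j i = cnj (H i j)" by (simp add: complex_eq_iff)
qed

section \<open>Gram decomposition of positive semidefinite forms\<close>

lemma Re_mult_cnj: "Re (z * cnj z) = (cmod z)\<^sup>2"
  by (simp only: complex_mult_cnj cmod_power2 Re_complex_of_real)

lemma psd_form_zero_diag_imp_zero_col:
  assumes herm: "hermitian_form n H" and pos: "\<And>f. 0 \<le> Re (quad_form n H f)"
    and m: "m < n" and Hmm: "H m m = 0" and j: "j < n"
  shows "H j m = 0"
proof (rule ccontr)
  define z where "z = H j m"
  assume "H j m \<noteq> 0"
  then have zpos: "0 < (cmod z)\<^sup>2" unfolding z_def by simp
  define e :: "nat \<Rightarrow> complex \<Rightarrow> nat \<Rightarrow> complex" where "e = (\<lambda>a c k. if k = a then c else 0)"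
  define t :: real where "t = (Re (H j j) + 1) / (2 * (cmod z)\<^sup>2)"
  define \<alpha> where "\<alpha> = - complex_of_real t * cnj z"
  have Hmj: "H m j = cnj z" using herm j m unfolding z_def hermitian_form_def by blast
  have "quad_form n H (\<lambda>k. e j 1 k + e m \<alpha> k) = H j j + z * \<alpha> + cnj \<alpha> * cnj z + cnj \<alpha> * H m m * \<alpha>"
    unfolding quad_form_add e_def
    using sesq_form_delta[OF j j, of H] sesq_form_delta[OF j m, of H]
      sesq_form_delta[OF m j, of H] sesq_form_delta[OF m m, of H] Hmj
    unfolding z_def by simp
  also have "\<dots> = H j j - 2 * complex_of_real t * (z * cnj z)"
    using Hmm unfolding \<alpha>_def by (simp add: algebra_simps)
  finally have "Re (quad_form n H (\<lambda>k. e j 1 k + e m \<alpha> k)) = Re (H j j) - 2 * t * (cmod z)\<^sup>2"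
    by (simp add: Re_mult_cnj[symmetric])
  also have "\<dots> = -1" unfolding t_def using zpos by (simp add: field_simps)
  finally show False using pos by (metis neg_0_le_iff_le not_one_le_zero)
qed

definition vanishes_before :: "nat \<Rightarrow> nat \<Rightarrow> (nat \<Rightarrow> nat \<Rightarrow> complex) \<Rightarrow> bool" where
  "vanishes_before n m H \<longleftrightarrow> (\<forall>i<n. \<forall>j<n. i < m \<or> j < m \<longrightarrow> H i j = 0)"

lemma vanishes_before_Suc_if_zero_diag:
  assumes herm: "hermitian_form n H" and pos: "\<And>f. 0 \<le> Re (quad_form n H f)"
    and m: "m < n" and Hmm: "H m m = 0" and van: "vanishes_before n m H"
  shows "vanishes_before n (Suc m) H"
  unfolding vanishes_before_def
proof (intro allI impI)
  fix i j assume i: "i < n" and j: "j < n" and "i < Suc m \<or> j < Suc m"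
  then consider "i < m \<or> j < m" | "i = m" | "j = m" by linarith
  then show "H i j = 0"
  proof cases
    case 1
    then show ?thesis using van i j unfolding vanishes_before_def by blast
  next
    case 2
    have "H i j = cnj (H j i)" using herm i j unfolding hermitian_form_def by blast
    then show ?thesis using psd_form_zero_diag_imp_zero_col[OF herm pos m Hmm j] 2 by simp
  next
    case 3
    then show ?thesis using psd_form_zero_diag_imp_zero_col[OF herm pos m Hmm i] by simp
  qed
qed

definition schur_complement :: "nat \<Rightarrow> (nat \<Rightarrow> nat \<Rightarrow> complex) \<Rightarrow> nat \<Rightarrow> nat \<Rightarrow> complex" where
  "schur_complement m H i j = H i j - H i m * cnj (H j m) / H m m"

lemma hermitian_schur_complement:
  assumes herm: "hermitian_form n H" and m: "m < n"
  shows "hermitian_form n (schur_complement m H)"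
  unfolding hermitian_form_def
proof (intro allI impI)
  fix i j assume "i < n" "j < n"
  then have "H j i = cnj (H i j)" "H m m = cnj (H m m)"
    using herm m unfolding hermitian_form_def by blast+
  then show "schur_complement m H j i = cnj (schur_complement m H i j)"
    unfolding schur_complement_def by simp
qed

lemma schur_complement_vanishes_before_Suc:
  assumes herm: "hermitian_form n H" and m: "m < n" and Hmm: "H m m \<noteq> 0"
    and van: "vanishes_before n m H"
  shows "vanishes_before n (Suc m) (schur_complement m H)"
  unfolding vanishes_before_def
proof (intro allI impI)
  fix i j assume i: "i < n" and j: "j < n" and "i < Suc m \<or> j < Suc m"
  then consider "i < m" | "j < m" | "i = m" | "j = m" by linarith
  then show "schur_complement m H i j = 0"
  proof cases
    case 1
    then show ?thesis using van i j m unfolding vanishes_before_def schur_complement_def by simp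
  next
    case 2
    then show ?thesis using van i j m unfolding vanishes_before_def schur_complement_def by simp
  next
    case 3
    have "H i j = cnj (H j i)" using herm i j unfolding hermitian_form_def by blast
    then show ?thesis using 3 Hmm unfolding schur_complement_def by simp
  next
    case 4
    have "cnj (H m m) = H m m" using herm m unfolding hermitian_form_def by (metis complex_cnj_cnj)
    then show ?thesis using 4 Hmm unfolding schur_complement_def by simp
  qed
qed

lemma schur_complement_nonneg:
  assumes herm: "hermitian_form n H" and pos: "\<And>f. 0 \<le> Re (quad_form n H f)"
    and m: "m < n" and Hmm: "H m m \<noteq> 0"
  shows "0 \<le> Re (quad_form n (schur_complement m H) f)"
proof -
  define c where "c = H m m"
  have Hm: "H m i = cnj (H i m)" if "i < n" for i
    using herm m that unfolding hermitian_form_def by blast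
  have cc: "cnj c = c" unfolding c_def using Hm[OF m] by simp
  define s where "s = (\<Sum>j<n. H m j * f j)"
  have cs: "(\<Sum>i<n. cnj (f i) * H i m) = cnj s"
    unfolding s_def cnj_sum by (intro sum.cong refl) (simp add: Hm)
  have s': "(\<Sum>j<n. cnj (H j m) * f j) = s"
    unfolding s_def by (intro sum.cong refl) (simp add: Hm)
  have "quad_form n (schur_complement m H) f
      = quad_form n H f - (\<Sum>i<n. \<Sum>j<n. (cnj (f i) * H i m) * (cnj (H j m) * f j)) / c"
    unfolding sesq_form_def schur_complement_def c_def
    by (simp add: algebra_simps sum_subtractf sum_divide_distrib)
  also have "\<dots> = quad_form n H f - cnj s * s / c"
    by (simp add: sum_product[symmetric] cs s')
  finally have schur: "quad_form n (schur_complement m H) f = quad_form n H f - cnj s * s / c" .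
  \<comment> \<open>the Schur complement is the form at the minimising shift \<open>f + \<alpha> e\<^sub>m\<close>\<close>
  define \<alpha> where "\<alpha> = - s / c"
  have "quad_form n H (\<lambda>k. f k + (if k = m then \<alpha> else 0))
      = quad_form n H f + cnj s * \<alpha> + cnj \<alpha> * s + cnj \<alpha> * c * \<alpha>"
    unfolding quad_form_add sesq_form_delta[OF m m] sesq_form_delta_right[OF m]
      sesq_form_delta_left[OF m] cs
    unfolding s_def c_def by simp
  also have "\<dots> = quad_form n H f - cnj s * s / c"
    unfolding \<alpha>_def using Hmm cc unfolding c_def[symmetric] by (simp add: field_simps)
  also have "\<dots> = quad_form n (schur_complement m H) f"
    by (rule schur[symmetric])
  finally show ?thesis
    using pos[of "\<lambda>k. f k + (if k = m then \<alpha> else 0)"] by simp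
qed

lemma gram_sum_update:
  "m < n \<Longrightarrow> (\<Sum>k\<in>{m..<n}. (g(m := v)) k i * cnj ((g(m := v)) k j))
     = v i * cnj (v j) + (\<Sum>k\<in>{Suc m..<n}. g k i * cnj (g k j))"
  by (simp add: sum.atLeast_Suc_lessThan)

lemma gram_decomposition_from:
  assumes "m \<le> n" and "hermitian_form n H" and "\<And>f. 0 \<le> Re (quad_form n H f)"
    and "vanishes_before n m H"
  shows "\<exists>g. \<forall>i<n. \<forall>j<n. H i j = (\<Sum>k\<in>{m..<n}. g k i * cnj (g k j))"
  using assms
proof (induction m arbitrary: H rule: inc_induct)
  case base
  then show ?case unfolding vanishes_before_def by auto
next
  case (step m)
  have m: "m < n" using step.hyps by simp
  have "H m m = cnj (H m m)" using step.prems(1) m unfolding hermitian_form_def by blast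
  then have "Im (H m m) = 0" by (simp add: complex_eq_iff)
  moreover have "0 \<le> Re (H m m)"
    using step.prems(2)[of "\<lambda>k. if k = m then 1 else 0"] sesq_form_delta[OF m m, of H 1 1] by simp
  ultimately consider "H m m = 0" | "0 < Re (H m m)" by (metis complex_eq_iff order_less_le zero_complex.sel)
  then show ?case
  proof cases
    case 1
    obtain g where g: "\<forall>i<n. \<forall>j<n. H i j = (\<Sum>k\<in>{Suc m..<n}. g k i * cnj (g k j))"
      using step.IH[OF step.prems(1,2) vanishes_before_Suc_if_zero_diag[OF step.prems(1,2) m 1 step.prems(3)]]
      by blast
    have "\<forall>i<n. \<forall>j<n. H i j = (\<Sum>k\<in>{m..<n}. (g(m := (\<lambda>_. 0))) k i * cnj ((g(m := (\<lambda>_. 0))) k j))"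
      unfolding gram_sum_update[OF m] using g by simp
    then show ?thesis by blast
  next
    case 2
    then have Hmm: "H m m \<noteq> 0" by auto
    obtain g where g: "\<forall>i<n. \<forall>j<n. schur_complement m H i j = (\<Sum>k\<in>{Suc m..<n}. g k i * cnj (g k j))"
      using step.IH[OF hermitian_schur_complement[OF step.prems(1) m]
          schur_complement_nonneg[OF step.prems(1,2) m Hmm]
          schur_complement_vanishes_before_Suc[OF step.prems(1) m Hmm step.prems(3)]]
      by blast
    define v where "v i = H i m / complex_of_real (sqrt (Re (H m m)))" for i
    have "H m m = complex_of_real (Re (H m m))" using \<open>Im (H m m) = 0\<close> by (simp add: complex_eq_iff)
    then have "v i * cnj (v j) = H i m * cnj (H j m) / H m m" for i j
      using 2 unfolding v_def by (simp flip: of_real_mult)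
    then have "\<forall>i<n. \<forall>j<n. H i j = (\<Sum>k\<in>{m..<n}. (g(m := v)) k i * cnj ((g(m := v)) k j))"
      unfolding gram_sum_update[OF m] using g unfolding schur_complement_def
      by (simp add: diff_eq_eq add.commute)
    then show ?thesis by blast
  qed
qed

lemma gram_decomposition:
  assumes "psd_form n H"
  obtains g where "\<forall>i<n. \<forall>j<n. H i j = (\<Sum>k<n. g k i * cnj (g k j))"
  using gram_decomposition_from[of 0 n H] hermitian_if_psd_form[OF assms] assms
  unfolding psd_form_def vanishes_before_def by (auto simp: atLeast0LessThan)

section \<open>The partial transpose of a state is bounded below by \<open>-1/2\<close>\<close>

lemma cmod_diff_square: "(cmod (u - w))\<^sup>2 = (cmod u)\<^sup>2 + (cmod w)\<^sup>2 - 2 * Re (u * cnj w)"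
  by (simp only: cmod_power2) (simp add: power2_eq_square algebra_simps)

lemma cmod_add_square: "(cmod (u + w))\<^sup>2 = (cmod u)\<^sup>2 + (cmod w)\<^sup>2 + 2 * Re (u * cnj w)"
  by (simp only: cmod_power2) (simp add: power2_eq_square algebra_simps)

text \<open>The antisymmetric part of \<open>x \<otimes> y\<close> has squared norm \<open>2 |x|\<^sup>2 |y|\<^sup>2 - 2 |\<langle>y, x\<rangle>|\<^sup>2\<close>.\<close>
lemma sum_wedge_square_le:
  fixes x y :: "nat \<Rightarrow> complex"
  shows "(\<Sum>a<d. \<Sum>a'<d. (cmod (x a * y a' - x a' * y a))\<^sup>2)
     \<le> 2 * (\<Sum>a<d. (cmod (x a))\<^sup>2) * (\<Sum>a<d. (cmod (y a))\<^sup>2)"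
proof -
  define z where "z = (\<Sum>a<d. x a * cnj (y a))"
  have e1: "(\<Sum>a<d. \<Sum>a'<d. (cmod (x a * y a'))\<^sup>2) = (\<Sum>a<d. (cmod (x a))\<^sup>2) * (\<Sum>a<d. (cmod (y a))\<^sup>2)"
    by (simp add: norm_mult power_mult_distrib sum_product)
  have e2: "(\<Sum>a<d. \<Sum>a'<d. (cmod (x a' * y a))\<^sup>2) = (\<Sum>a<d. (cmod (x a))\<^sup>2) * (\<Sum>a<d. (cmod (y a))\<^sup>2)"
    using e1 by (subst sum.swap) simp
  have "z * cnj z = (\<Sum>a<d. \<Sum>a'<d. x a * y a' * cnj (x a' * y a))"
    unfolding z_def by (simp add: sum_product cnj_sum algebra_simps)
  then have e3: "(\<Sum>a<d. \<Sum>a'<d. Re (x a * y a' * cnj (x a' * y a))) = (cmod z)\<^sup>2"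
    by (simp add: Re_sum flip: Re_mult_cnj)
  have "(\<Sum>a<d. \<Sum>a'<d. (cmod (x a * y a' - x a' * y a))\<^sup>2)
      = (\<Sum>a<d. \<Sum>a'<d. (cmod (x a * y a'))\<^sup>2) + (\<Sum>a<d. \<Sum>a'<d. (cmod (x a' * y a))\<^sup>2)
        - 2 * (\<Sum>a<d. \<Sum>a'<d. Re (x a * y a' * cnj (x a' * y a)))"
    by (simp add: cmod_diff_square sum.distrib sum_subtractf sum_distrib_left)
  also have "\<dots> = 2 * (\<Sum>a<d. (cmod (x a))\<^sup>2) * (\<Sum>a<d. (cmod (y a))\<^sup>2) - 2 * (cmod z)\<^sup>2"
    using e1 e2 e3 by simp
  finally show ?thesis by simp
qed

lemma L2_set_sum_le:
  fixes f :: "'b \<Rightarrow> 'c \<Rightarrow> complex"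
  assumes "finite B"
  shows "L2_set (\<lambda>p. cmod (\<Sum>b\<in>B. f b p)) A \<le> (\<Sum>b\<in>B. L2_set (\<lambda>p. cmod (f b p)) A)"
  using assms
proof (induction B rule: finite_induct)
  case empty
  then show ?case by (simp add: L2_set_0')
next
  case (insert b B)
  have "L2_set (\<lambda>p. cmod (\<Sum>b\<in>insert b B. f b p)) A
      \<le> L2_set (\<lambda>p. cmod (f b p) + cmod (\<Sum>b\<in>B. f b p)) A"
    using insert by (intro L2_set_mono) (auto simp: norm_triangle_ineq)
  also have "\<dots> \<le> L2_set (\<lambda>p. cmod (f b p)) A + L2_set (\<lambda>p. cmod (\<Sum>b\<in>B. f b p)) A"
    by (rule L2_set_triangle_ineq)
  also have "\<dots> \<le> (\<Sum>b\<in>insert b B. L2_set (\<lambda>p. cmod (f b p)) A)"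
    using insert by simp
  finally show ?case .
qed

lemma L2_set_column_norms:
  "L2_set (\<lambda>b. sqrt (\<Sum>a<d. (cmod (G a b))\<^sup>2)) {..<d} = sqrt (\<Sum>a<d. \<Sum>b<d. (cmod (G a b))\<^sup>2)"
proof -
  have "L2_set (\<lambda>b. sqrt (\<Sum>a<d. (cmod (G a b))\<^sup>2)) {..<d} = sqrt (\<Sum>b<d. \<Sum>a<d. (cmod (G a b))\<^sup>2)"
    unfolding L2_set_def by (simp add: sum_nonneg)
  moreover have "(\<Sum>b<d. \<Sum>a<d. (cmod (G a b))\<^sup>2) = (\<Sum>a<d. \<Sum>b<d. (cmod (G a b))\<^sup>2)"
    by (rule sum.swap)
  ultimately show ?thesis by simp
qed

lemma sum_antisym_product_square_le:
  fixes G V :: "nat \<Rightarrow> nat \<Rightarrow> complex"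
  shows "(\<Sum>a<d. \<Sum>a'<d. (cmod ((\<Sum>b<d. G a b * V a' b) - (\<Sum>b<d. G a' b * V a b)))\<^sup>2)
     \<le> 2 * (\<Sum>a<d. \<Sum>b<d. (cmod (G a b))\<^sup>2) * (\<Sum>a<d. \<Sum>b<d. (cmod (V a b))\<^sup>2)"
    (is "?D \<le> _")
proof -
  define A where "A = {..<d} \<times> {..<d}"
  define \<omega> where "\<omega> = (\<lambda>b (p::nat \<times> nat). G (fst p) b * V (snd p) b - G (snd p) b * V (fst p) b)"
  define x where "x = (\<lambda>b. sqrt (\<Sum>a<d. (cmod (G a b))\<^sup>2))"
  define y where "y = (\<lambda>b. sqrt (\<Sum>a<d. (cmod (V a b))\<^sup>2))"
  have column: "L2_set (\<lambda>p. cmod (\<omega> b p)) A \<le> sqrt 2 * (\<bar>x b\<bar> * \<bar>y b\<bar>)" for b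
  proof -
    have "(\<Sum>p\<in>A. (cmod (\<omega> b p))\<^sup>2) \<le> 2 * (x b)\<^sup>2 * (y b)\<^sup>2"
      using sum_wedge_square_le[of "\<lambda>a. G a b" "\<lambda>a. V a b" d]
      unfolding A_def \<omega>_def x_def y_def
      by (subst (asm) sum.cartesian_product) (simp add: case_prod_beta sum_nonneg)
    then have "L2_set (\<lambda>p. cmod (\<omega> b p)) A \<le> sqrt (2 * (x b)\<^sup>2 * (y b)\<^sup>2)"
      unfolding L2_set_def by (rule real_sqrt_le_mono)
    then show ?thesis by (simp add: real_sqrt_mult)
  qed
  have "sqrt ?D = L2_set (\<lambda>p. cmod (\<Sum>b<d. \<omega> b p)) A"
    unfolding L2_set_def A_def \<omega>_def
    by (subst sum.cartesian_product) (simp add: case_prod_beta sum_subtractf)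
  also have "\<dots> \<le> (\<Sum>b<d. L2_set (\<lambda>p. cmod (\<omega> b p)) A)"
    by (rule L2_set_sum_le) simp
  also have "\<dots> \<le> sqrt 2 * (\<Sum>b<d. \<bar>x b\<bar> * \<bar>y b\<bar>)"
    using column by (simp add: sum_distrib_left sum_mono)
  also have "\<dots> \<le> sqrt 2 * (L2_set x {..<d} * L2_set y {..<d})"
    by (intro mult_left_mono L2_set_mult_ineq) simp
  also have "\<dots> = sqrt (2 * (\<Sum>a<d. \<Sum>b<d. (cmod (G a b))\<^sup>2) * (\<Sum>a<d. \<Sum>b<d. (cmod (V a b))\<^sup>2))"
    unfolding x_def y_def L2_set_column_norms by (simp add: real_sqrt_mult)
  finally show ?thesis by simp
qed

lemma Im_sum_twisted: "Im (\<Sum>a<d. \<Sum>a'<d. X a a' * cnj (X a' a)) = 0"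
proof -
  define S where "S = (\<Sum>a<d. \<Sum>a'<d. X a a' * cnj (X a' a))"
  have "cnj S = (\<Sum>a'<d. \<Sum>a<d. cnj (X a a') * X a' a)"
    unfolding S_def cnj_sum by (subst sum.swap) simp
  also have "\<dots> = S" unfolding S_def by (simp add: mult.commute)
  finally show ?thesis unfolding S_def[symmetric] by (simp add: complex_eq_iff)
qed

lemma Re_sum_twisted_ge:
  "-(1/4) * (\<Sum>a<d. \<Sum>a'<d. (cmod (X a a' - X a' a))\<^sup>2) \<le> Re (\<Sum>a<d. \<Sum>a'<d. X a a' * cnj (X a' a))"
proof -
  have "(\<Sum>a<d. \<Sum>a'<d. (cmod (X a a' + X a' a))\<^sup>2)
     = (\<Sum>a<d. \<Sum>a'<d. (cmod (X a a' - X a' a))\<^sup>2) + 4 * Re (\<Sum>a<d. \<Sum>a'<d. X a a' * cnj (X a' a))"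
    by (simp add: cmod_add_square cmod_diff_square sum.distrib sum_subtractf sum_distrib_left
        Re_sum algebra_simps)
  moreover have "0 \<le> (\<Sum>a<d. \<Sum>a'<d. (cmod (X a a' + X a' a))\<^sup>2)" by (intro sum_nonneg) simp
  ultimately show ?thesis by linarith
qed

lemma Re_sum_twisted_product_ge:
  fixes d :: nat and G V :: "nat \<Rightarrow> nat \<Rightarrow> complex"
  defines "X \<equiv> \<lambda>a a'. \<Sum>b<d. G a b * V a' b"
  shows "-(1/2) * (\<Sum>a<d. \<Sum>b<d. (cmod (G a b))\<^sup>2) * (\<Sum>a<d. \<Sum>b<d. (cmod (V a b))\<^sup>2)
     \<le> Re (\<Sum>a<d. \<Sum>a'<d. X a a' * cnj (X a' a))"
  using Re_sum_twisted_ge[where d=d and X=X] sum_antisym_product_square_le[where d=d and G=G and V=V]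
  unfolding X_def by linarith

definition ptrans :: "nat \<Rightarrow> (nat \<Rightarrow> nat \<Rightarrow> complex) \<Rightarrow> nat \<Rightarrow> nat \<Rightarrow> complex" where
  "ptrans d R i j = R ((i div d) * d + j mod d) ((j div d) * d + i mod d)"

lemma quad_form_ptrans_rank_one:
  fixes d :: nat and u f :: "nat \<Rightarrow> complex"
  defines "X \<equiv> \<lambda>a a'. \<Sum>b<d. u (a * d + b) * f (a' * d + b)"
  shows "quad_form (d * d) (ptrans d (\<lambda>i j. u i * cnj (u j))) f = (\<Sum>a<d. \<Sum>a'<d. X a a' * cnj (X a' a))"
proof -
  have "quad_form (d * d) (ptrans d (\<lambda>i j. u i * cnj (u j))) f
    = (\<Sum>a<d. \<Sum>b<d. \<Sum>a'<d. \<Sum>b'<d.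
         cnj (f (a * d + b)) * (u (a * d + b') * cnj (u (a' * d + b))) * f (a' * d + b'))"
    unfolding sesq_form_pair_idx by (intro sum.cong refl) (simp add: ptrans_def)
  also have "\<dots> = (\<Sum>a<d. \<Sum>a'<d. \<Sum>b<d. \<Sum>b'<d.
         cnj (f (a * d + b)) * (u (a * d + b') * cnj (u (a' * d + b))) * f (a' * d + b'))"
    by (rule sum.cong[OF refl], rule sum.swap)
  also have "\<dots> = (\<Sum>a<d. \<Sum>a'<d. \<Sum>b'<d. \<Sum>b<d.
         cnj (f (a * d + b)) * (u (a * d + b') * cnj (u (a' * d + b))) * f (a' * d + b'))"
    by (rule sum.cong[OF refl], rule sum.cong[OF refl], rule sum.swap)
  also have "\<dots> = (\<Sum>a<d. \<Sum>a'<d. X a a' * cnj (X a' a))"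
    unfolding X_def by (simp add: cnj_sum sum_product algebra_simps)
  finally show ?thesis .
qed

lemma quad_form_ptrans_gram:
  fixes f :: "nat \<Rightarrow> complex"
  assumes gram: "\<forall>i<d * d. \<forall>j<d * d. R i j = (\<Sum>k<d * d. g k i * cnj (g k j))"
  shows "quad_form (d * d) (ptrans d R) f = (\<Sum>k<d * d. \<Sum>a<d. \<Sum>a'<d.
           (\<Sum>b<d. g k (a * d + b) * f (a' * d + b)) * cnj (\<Sum>b<d. g k (a' * d + b) * f (a * d + b)))"
proof -
  have "quad_form (d * d) (ptrans d R) f
      = quad_form (d * d) (\<lambda>i j. \<Sum>k<d * d. ptrans d (\<lambda>i j. g k i * cnj (g k j)) i j) f"
    by (rule sesq_form_cong) (simp_all add: ptrans_def gram mixed_idx_less)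
  also have "\<dots> = (\<Sum>k<d * d. quad_form (d * d) (ptrans d (\<lambda>i j. g k i * cnj (g k j))) f)"
    by (rule sesq_form_sum)
  finally show ?thesis unfolding quad_form_ptrans_rank_one .
qed

lemma sum_gram_norms:
  assumes "\<forall>i<n. \<forall>j<n. R i j = (\<Sum>k<n. g k i * cnj (g k j))"
  shows "(\<Sum>k<n. \<Sum>i<n. (cmod (g k i))\<^sup>2) = Re (\<Sum>i<n. R i i)"
proof -
  have "(\<Sum>k<n. \<Sum>i<n. (cmod (g k i))\<^sup>2) = (\<Sum>i<n. \<Sum>k<n. (cmod (g k i))\<^sup>2)"
    by (rule sum.swap)
  also have "\<dots> = (\<Sum>i<n. Re (R i i))"
  proof (intro sum.cong refl)
    fix i assume "i \<in> {..<n}"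
    then have "R i i = (\<Sum>k<n. g k i * cnj (g k i))" using assms by simp
    then show "(\<Sum>k<n. (cmod (g k i))\<^sup>2) = Re (R i i)" by (simp only: Re_sum Re_mult_cnj)
  qed
  finally show ?thesis by simp
qed

lemma quad_form_ptrans_state_ge:
  assumes "psd_form (d * d) R" and tr: "(\<Sum>i<d * d. R i i) = 1"
  shows "Im (quad_form (d * d) (ptrans d R) f) = 0"
    and "-(1/2) * (\<Sum>i<d * d. (cmod (f i))\<^sup>2) \<le> Re (quad_form (d * d) (ptrans d R) f)"
proof -
  obtain g where gram: "\<forall>i<d * d. \<forall>j<d * d. R i j = (\<Sum>k<d * d. g k i * cnj (g k j))"
    using gram_decomposition[OF assms(1)] by blast
  note eq = quad_form_ptrans_gram[OF gram, where f = f]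
  show "Im (quad_form (d * d) (ptrans d R) f) = 0"
    unfolding eq by (simp only: Im_sum[of _ "{..<d * d}"] Im_sum_twisted sum.neutral_const)
  define N where "N k = (\<Sum>a<d. \<Sum>b<d. (cmod (g k (a * d + b)))\<^sup>2)" for k
  define nf where "nf = (\<Sum>i<d * d. (cmod (f i))\<^sup>2)"
  have "(\<Sum>k<d * d. \<Sum>i<d * d. (cmod (g k i))\<^sup>2) = 1"
    using sum_gram_norms[OF gram] tr by simp
  then have "(\<Sum>k<d * d. N k) = 1"
    unfolding N_def by (simp only: sum_pair_idx)
  then have "-(1/2) * nf = -(1/2) * (\<Sum>k<d * d. N k) * nf"
    by simp
  also have "\<dots> = (\<Sum>k<d * d. -(1/2) * N k * nf)"
    by (simp add: sum_distrib_left sum_distrib_right)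
  also have "\<dots> \<le> (\<Sum>k<d * d. Re (\<Sum>a<d. \<Sum>a'<d. (\<Sum>b<d. g k (a * d + b) * f (a' * d + b))
                     * cnj (\<Sum>b<d. g k (a' * d + b) * f (a * d + b))))"
  proof (rule sum_mono)
    fix k
    have "nf = (\<Sum>a<d. \<Sum>b<d. (cmod (f (a * d + b)))\<^sup>2)"
      unfolding nf_def by (rule sum_pair_idx)
    then show "-(1/2) * N k * nf \<le> Re (\<Sum>a<d. \<Sum>a'<d. (\<Sum>b<d. g k (a * d + b) * f (a' * d + b))
                     * cnj (\<Sum>b<d. g k (a' * d + b) * f (a * d + b)))"
      unfolding N_def
      using Re_sum_twisted_product_ge[where d = d and G = "\<lambda>a b. g k (a * d + b)" and V = "\<lambda>a b. f (a * d + b)"] by simp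
  qed
  also have "\<dots> = Re (quad_form (d * d) (ptrans d R) f)"
    unfolding eq by (simp only: Re_sum[of _ "{..<d * d}"])
  finally show "-(1/2) * (\<Sum>i<d * d. (cmod (f i))\<^sup>2) \<le> Re (quad_form (d * d) (ptrans d R) f)"
    unfolding nf_def .
qed

section \<open>The swap operator and the (anti)symmetric projectors\<close>

lemma swap_op_carrier: "swap_op d \<in> carrier_mat (d * d) (d * d)"
  unfolding swap_op_def by simp

lemma P_antisym_carrier: "P_antisym d \<in> carrier_mat (d * d) (d * d)"
  unfolding P_antisym_def swap_op_def carrier_mat_def by simp

lemma P_sym_carrier: "P_sym d \<in> carrier_mat (d * d) (d * d)"
  unfolding P_sym_def swap_op_def carrier_mat_def by simp

lemma partial_transpose_carrier: "partial_transpose d \<sigma> \<in> carrier_mat (d * d) (d * d)"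
  unfolding partial_transpose_def by simp

lemma dim_P_antisym [simp]: "dim_row (P_antisym d) = d * d" "dim_col (P_antisym d) = d * d"
  using P_antisym_carrier[of d] by auto

lemma swap_op_entry:
  "i < d * d \<Longrightarrow> j < d * d \<Longrightarrow> swap_op d $$ (i, j) = (if i = swap_idx d j then 1 else 0)"
  unfolding swap_op_def swap_idx_def by simp

lemma P_antisym_entry:
  "i < d * d \<Longrightarrow> j < d * d \<Longrightarrow>
   P_antisym d $$ (i, j) = (if i = j then 1/2 else 0) - (if i = swap_idx d j then 1/2 else 0)"
  unfolding P_antisym_def using swap_op_carrier[of d] by (simp add: swap_op_entry)

lemma P_sym_entry:
  "i < d * d \<Longrightarrow> j < d * d \<Longrightarrow>
   P_sym d $$ (i, j) = (if i = j then 1/2 else 0) + (if i = swap_idx d j then 1/2 else 0)"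
  unfolding P_sym_def using swap_op_carrier[of d] by (simp add: swap_op_entry)

lemma partial_transpose_entry:
  "i < d * d \<Longrightarrow> j < d * d \<Longrightarrow> partial_transpose d \<sigma> $$ (i, j) = ptrans d (entries \<sigma>) i j"
  unfolding partial_transpose_def ptrans_def by simp

lemma P_sym_swap_idx:
  assumes "i < d * d" "j < d * d"
  shows "P_sym d $$ (swap_idx d i, j) = P_sym d $$ (i, j)"
    and "P_sym d $$ (i, swap_idx d j) = P_sym d $$ (i, j)"
  using assms swap_idx_less swap_idx_swap_idx[OF assms(1)] swap_idx_swap_idx[OF assms(2)]
    swap_idx_eq_iff[OF assms] by (auto simp: P_sym_entry)

lemma mtrace_carrier: "A \<in> carrier_mat n n \<Longrightarrow> mtrace A = (\<Sum>i<n. A $$ (i, i))"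
  unfolding mtrace_def by simp

lemma mat_mult_entry_sum:
  "A \<in> carrier_mat n n \<Longrightarrow> B \<in> carrier_mat n n \<Longrightarrow> i < n \<Longrightarrow> j < n \<Longrightarrow>
   (A * B) $$ (i, j) = (\<Sum>k<n. A $$ (i, k) * B $$ (k, j))"
  by (simp add: scalar_prod_def atLeast0LessThan)

lemma sum_P_antisym_left:
  assumes "i < d * d"
  shows "(\<Sum>k<d * d. P_antisym d $$ (i, k) * F k) = (F i - F (swap_idx d i)) / 2"
proof -
  have "(\<Sum>k<d * d. P_antisym d $$ (i, k) * F k)
      = (\<Sum>k<d * d. if k = i then F k / 2 else 0) - (\<Sum>k<d * d. if k = swap_idx d i then F k / 2 else 0)"
    unfolding sum_subtractf[symmetric]
    using assms by (intro sum.cong refl) (auto simp: P_antisym_entry swap_idx_eq_iff)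
  then show ?thesis using assms swap_idx_less[OF assms] by (simp add: diff_divide_distrib)
qed

lemma sum_P_antisym_right:
  assumes "j < d * d"
  shows "(\<Sum>k<d * d. F k * P_antisym d $$ (k, j)) = (F j - F (swap_idx d j)) / 2"
proof -
  have "(\<Sum>k<d * d. F k * P_antisym d $$ (k, j))
      = (\<Sum>k<d * d. if k = j then F k / 2 else 0) - (\<Sum>k<d * d. if k = swap_idx d j then F k / 2 else 0)"
    unfolding sum_subtractf[symmetric]
    using assms by (intro sum.cong refl) (simp add: P_antisym_entry)
  then show ?thesis using assms swap_idx_less[OF assms] by (simp add: diff_divide_distrib)
qed

lemma sum_P_sym_left:
  assumes "i < d * d"
  shows "(\<Sum>k<d * d. P_sym d $$ (i, k) * F k) = (F i + F (swap_idx d i)) / 2"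
proof -
  have "(\<Sum>k<d * d. P_sym d $$ (i, k) * F k)
      = (\<Sum>k<d * d. if k = i then F k / 2 else 0) + (\<Sum>k<d * d. if k = swap_idx d i then F k / 2 else 0)"
    unfolding sum.distrib[symmetric]
    using assms by (intro sum.cong refl) (auto simp: P_sym_entry swap_idx_eq_iff)
  then show ?thesis using assms swap_idx_less[OF assms] by (simp add: add_divide_distrib)
qed

lemma P_antisym_mult_entry:
  assumes "X \<in> carrier_mat (d * d) (d * d)" "i < d * d" "j < d * d"
  shows "(P_antisym d * X) $$ (i, j) = (X $$ (i, j) - X $$ (swap_idx d i, j)) / 2"
  using mat_mult_entry_sum[OF P_antisym_carrier assms] sum_P_antisym_left[OF assms(2)] by simp

lemma P_antisym_sandwich_entry:
  assumes X: "X \<in> carrier_mat (d * d) (d * d)" and i: "i < d * d" and j: "j < d * d"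
  shows "(P_antisym d * X * P_antisym d) $$ (i, j)
     = (X $$ (i, j) - X $$ (swap_idx d i, j) - X $$ (i, swap_idx d j) + X $$ (swap_idx d i, swap_idx d j)) / 4"
proof -
  have "P_antisym d * X \<in> carrier_mat (d * d) (d * d)" using mult_carrier_mat[OF P_antisym_carrier X] .
  then have "(P_antisym d * X * P_antisym d) $$ (i, j)
      = ((P_antisym d * X) $$ (i, j) - (P_antisym d * X) $$ (i, swap_idx d j)) / 2"
    using mat_mult_entry_sum[OF _ P_antisym_carrier i j] sum_P_antisym_right[OF j] by simp
  also have "\<dots> = (X $$ (i, j) - X $$ (swap_idx d i, j) - X $$ (i, swap_idx d j)
                    + X $$ (swap_idx d i, swap_idx d j)) / 4"
    unfolding P_antisym_mult_entry[OF X i j] P_antisym_mult_entry[OF X i swap_idx_less[OF j]]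
    by (simp add: field_simps)
  finally show ?thesis .
qed

lemma antisym_entry_swap_idx:
  assumes X: "\<rho> \<in> carrier_mat (d * d) (d * d)" and as: "\<rho> = P_antisym d * \<rho> * P_antisym d"
    and i: "i < d * d" and j: "j < d * d"
  shows "\<rho> $$ (swap_idx d i, j) = - \<rho> $$ (i, j)" and "\<rho> $$ (i, swap_idx d j) = - \<rho> $$ (i, j)"
proof -
  note si = swap_idx_less[OF i] and sj = swap_idx_less[OF j]
  have e1: "\<rho> $$ (i, j) = (\<rho> $$ (i, j) - \<rho> $$ (swap_idx d i, j) - \<rho> $$ (i, swap_idx d j)
                          + \<rho> $$ (swap_idx d i, swap_idx d j)) / 4"
    using P_antisym_sandwich_entry[OF X i j] as by simp
  have e2: "\<rho> $$ (swap_idx d i, j) = (\<rho> $$ (swap_idx d i, j) - \<rho> $$ (i, j)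
                                     - \<rho> $$ (swap_idx d i, swap_idx d j) + \<rho> $$ (i, swap_idx d j)) / 4"
    using P_antisym_sandwich_entry[OF X si j] as swap_idx_swap_idx[OF i] by simp
  have e3: "\<rho> $$ (i, swap_idx d j) = (\<rho> $$ (i, swap_idx d j) - \<rho> $$ (swap_idx d i, swap_idx d j)
                                     - \<rho> $$ (i, j) + \<rho> $$ (swap_idx d i, j)) / 4"
    using P_antisym_sandwich_entry[OF X i sj] as swap_idx_swap_idx[OF j] by simp
  have "\<rho> $$ (i, j) + \<rho> $$ (swap_idx d i, j) = 0"
    using arg_cong2[OF e1 e2, of "(+)"] by (simp add: field_simps)
  then show "\<rho> $$ (swap_idx d i, j) = - \<rho> $$ (i, j)" by (simp add: add_eq_0_iff)
  have "\<rho> $$ (i, j) + \<rho> $$ (i, swap_idx d j) = 0"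
    using arg_cong2[OF e1 e3, of "(+)"] by (simp add: field_simps)
  then show "\<rho> $$ (i, swap_idx d j) = - \<rho> $$ (i, j)" by (simp add: add_eq_0_iff)
qed

lemma mtrace_P_antisym_mult:
  assumes "X \<in> carrier_mat (d * d) (d * d)"
  shows "mtrace (P_antisym d * X) = (\<Sum>i<d * d. (X $$ (i, i) - X $$ (swap_idx d i, i)) / 2)"
  unfolding mtrace_def
proof (simp, intro sum.cong refl)
  fix i assume "i \<in> {..<d * d}"
  then show "(P_antisym d * X) $$ (i, i) = (X $$ (i, i) - X $$ (swap_idx d i, i)) / 2"
    using P_antisym_mult_entry[OF assms] by simp
qed

lemma trace_P_sym: "(\<Sum>i<d * d. P_sym d $$ (i, i)) = (of_nat (d * d) + of_nat d) / 2"
proof -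
  have "(\<Sum>i<d * d. P_sym d $$ (i, i)) = (\<Sum>i<d * d. 1/2 + (if i = swap_idx d i then 1/2 else 0))"
    by (intro sum.cong refl) (simp add: P_sym_entry)
  also have "\<dots> = of_nat (d * d) / 2 + (\<Sum>i<d * d. if i = swap_idx d i then 1/2 else 0)"
    by (simp add: sum.distrib)
  also have "(\<Sum>i<d * d. if i = swap_idx d i then 1/2 else 0) = (\<Sum>a<d. \<Sum>b<d. if b = a then 1/2 else (0::complex))"
    unfolding sum_pair_idx
  proof (intro sum.cong refl)
    fix a b assume "a \<in> {..<d}" "b \<in> {..<d}"
    then have a: "a < d" and b: "b < d" by auto
    have "a * d + b = swap_idx d (a * d + b) \<longleftrightarrow> b = a"
      unfolding swap_idx_pair[OF b] using pair_idx_eq_iff[OF b a] by auto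
    then show "(if a * d + b = swap_idx d (a * d + b) then 1/2 else (0::complex)) = (if b = a then 1/2 else 0)"
      by simp
  qed
  also have "\<dots> = of_nat d / 2" by simp
  finally show ?thesis by (simp add: add_divide_distrib)
qed

lemma Im_sum_swap_idx: "Im (\<Sum>i<d * d. cnj (f i) * f (swap_idx d i)) = 0"
proof -
  define W where "W = (\<Sum>i<d * d. cnj (f i) * f (swap_idx d i))"
  have "cnj W = (\<Sum>i<d * d. f (swap_idx d i) * cnj (f (swap_idx d (swap_idx d i))))"
    unfolding W_def cnj_sum by (subst sum_swap_idx) (simp add: mult.commute)
  also have "\<dots> = W" unfolding W_def by (intro sum.cong refl) (simp add: swap_idx_swap_idx mult.commute)
  finally show ?thesis unfolding W_def[symmetric] by (simp add: complex_eq_iff)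
qed

lemma Re_sum_swap_idx_ge: "- (\<Sum>i<d * d. (cmod (f i))\<^sup>2) \<le> Re (\<Sum>i<d * d. cnj (f i) * f (swap_idx d i))"
proof -
  have "- (\<Sum>i<d * d. (cmod (f i))\<^sup>2)
      = -((\<Sum>i<d * d. (cmod (f i))\<^sup>2) + (\<Sum>i<d * d. (cmod (f (swap_idx d i)))\<^sup>2)) / 2"
    using sum_swap_idx[of "\<lambda>i. (cmod (f i))\<^sup>2" d] by simp
  also have "\<dots> = (\<Sum>i<d * d. -((cmod (f i))\<^sup>2 + (cmod (f (swap_idx d i)))\<^sup>2) / 2)"
    by (simp only: sum_divide_distrib[symmetric] sum_negf sum.distrib)
  also have "\<dots> \<le> Re (\<Sum>i<d * d. cnj (f i) * f (swap_idx d i))"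
    unfolding Re_sum
  proof (rule sum_mono)
    fix i
    have "0 \<le> (cmod (f (swap_idx d i) + f i))\<^sup>2" by simp
    then show "-((cmod (f i))\<^sup>2 + (cmod (f (swap_idx d i)))\<^sup>2) / 2 \<le> Re (cnj (f i) * f (swap_idx d i))"
      unfolding cmod_add_square by (simp add: mult.commute)
  qed
  finally show ?thesis .
qed

lemma psd_form_P_sym: "psd_form (d * d) (entries (P_sym d))"
  unfolding psd_form_def
proof
  fix f :: "nat \<Rightarrow> complex"
  have "quad_form (d * d) (entries (P_sym d)) f = (\<Sum>i<d * d. cnj (f i) * ((f i + f (swap_idx d i)) / 2))"
    unfolding sesq_form_def
  proof (intro sum.cong refl)
    fix i assume "i \<in> {..<d * d}"
    then have "(\<Sum>j<d * d. P_sym d $$ (i, j) * f j) = (f i + f (swap_idx d i)) / 2"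
      by (simp add: sum_P_sym_left)
    moreover have "(\<Sum>j<d * d. cnj (f i) * P_sym d $$ (i, j) * f j)
        = cnj (f i) * (\<Sum>j<d * d. P_sym d $$ (i, j) * f j)"
      by (simp add: sum_distrib_left mult.assoc)
    ultimately show "(\<Sum>j<d * d. cnj (f i) * P_sym d $$ (i, j) * f j) = cnj (f i) * ((f i + f (swap_idx d i)) / 2)"
      by simp
  qed
  also have "\<dots> = ((\<Sum>i<d * d. cnj (f i) * f i) + (\<Sum>i<d * d. cnj (f i) * f (swap_idx d i))) / 2"
    by (simp add: distrib_left add_divide_distrib sum.distrib sum_divide_distrib)
  finally have q: "quad_form (d * d) (entries (P_sym d)) f
      = ((\<Sum>i<d * d. cnj (f i) * f i) + (\<Sum>i<d * d. cnj (f i) * f (swap_idx d i))) / 2" .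
  have "Re (\<Sum>i<d * d. cnj (f i) * f i) = (\<Sum>i<d * d. (cmod (f i))\<^sup>2)"
    by (simp only: Re_sum Re_mult_cnj[symmetric] mult.commute)
  moreover have "Im (\<Sum>i<d * d. cnj (f i) * f i) = 0"
    by (simp add: Im_sum)
  ultimately show "Im (quad_form (d * d) (entries (P_sym d)) f) = 0 \<and> 0 \<le> Re (quad_form (d * d) (entries (P_sym d)) f)"
    unfolding q using Im_sum_swap_idx[where f = f and d = d] Re_sum_swap_idx_ge[where f = f and d = d]
    by (simp del: Re_sum Im_sum)
qed

text \<open>\<open>P_sym\<^sup>\<Gamma> = (1 + |\<phi>\<rangle>\<langle>\<phi>|) / 2\<close> with \<open>\<phi> = \<Sum>\<^sub>a |a a\<rangle>\<close>.\<close>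
lemma quad_form_ptrans_P_sym_ge:
  "Im (quad_form (d * d) (ptrans d (entries (P_sym d))) f) = 0 \<and>
   (1/2) * (\<Sum>i<d * d. (cmod (f i))\<^sup>2) \<le> Re (quad_form (d * d) (ptrans d (entries (P_sym d))) f)"
proof -
  define F where "F = (\<lambda>a b. f (a * d + b))"
  define s where "s = (\<Sum>a<d. F a a)"
  have "quad_form (d * d) (ptrans d (entries (P_sym d))) f =
     (\<Sum>a<d. \<Sum>b<d. \<Sum>a'<d. \<Sum>b'<d.
        (if a' = a then (if b' = b then cnj (F a b) * F a b / 2 else 0) else 0)
      + (if b = a then (if b' = a' then cnj (F a a) * F a' a' / 2 else 0) else 0))"
    unfolding sesq_form_pair_idx
  proof (intro sum.cong refl)
    fix a b a' b' assume "a \<in> {..<d}" "b \<in> {..<d}" "a' \<in> {..<d}" "b' \<in> {..<d}"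
    then have a: "a < d" and b: "b < d" and a': "a' < d" and b': "b' < d" by auto
    have "ptrans d (entries (P_sym d)) (a * d + b) (a' * d + b') = P_sym d $$ (a * d + b', a' * d + b)"
      unfolding ptrans_def using b b' by simp
    also have "\<dots> = (if a = a' \<and> b' = b then 1/2 else 0) + (if a = b \<and> b' = a' then 1/2 else 0)"
      using a b a' b' by (simp add: P_sym_entry pair_idx_less swap_idx_pair pair_idx_eq_iff)
    finally show "cnj (f (a * d + b)) * ptrans d (entries (P_sym d)) (a * d + b) (a' * d + b') * f (a' * d + b') =
        (if a' = a then (if b' = b then cnj (F a b) * F a b / 2 else 0) else 0)
      + (if b = a then (if b' = a' then cnj (F a a) * F a' a' / 2 else 0) else 0)"
      unfolding F_def by (auto simp: algebra_simps)
  qed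
  also have "\<dots> = (\<Sum>a<d. \<Sum>b<d. cnj (F a b) * F a b / 2) + cnj s * s / 2"
    unfolding s_def
    by (simp only: sum.distrib sum_delta_pairs_left sum_delta_pairs_right)
      (simp add: sum_product cnj_sum sum_divide_distrib)
  finally have q: "quad_form (d * d) (ptrans d (entries (P_sym d))) f
      = (\<Sum>a<d. \<Sum>b<d. cnj (F a b) * F a b / 2) + cnj s * s / 2" .
  have "Re (\<Sum>a<d. \<Sum>b<d. cnj (F a b) * F a b / 2) = (1/2) * (\<Sum>i<d * d. (cmod (f i))\<^sup>2)"
    unfolding F_def sum_pair_idx[of _ d]
    by (simp add: Re_sum Re_mult_cnj[symmetric] mult.commute sum_divide_distrib)
  moreover have "0 \<le> Re (cnj s * s / 2)" using Re_mult_cnj[of s] by (simp add: mult.commute)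
  ultimately show ?thesis unfolding q by (simp add: Im_sum)
qed

section \<open>The upper bound\<close>

definition max_entangled :: "nat \<Rightarrow> nat \<Rightarrow> complex" where
  "max_entangled d i = (if i div d = i mod d then 1 else 0)"

lemma quad_form_ptrans_max_entangled:
  "quad_form (d * d) (ptrans d R) (max_entangled d) = (\<Sum>i<d * d. R (swap_idx d i) i)"
proof -
  have "quad_form (d * d) (ptrans d R) (max_entangled d)
      = (\<Sum>a<d. \<Sum>b<d. \<Sum>a'<d. \<Sum>b'<d.
           if b = a then (if b' = a' then R (a * d + a') (a' * d + a) else 0) else 0)"
    unfolding sesq_form_pair_idx by (intro sum.cong refl) (auto simp: max_entangled_def ptrans_def)
  also have "\<dots> = (\<Sum>b<d. \<Sum>a<d. R (b * d + a) (a * d + b))"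
    by (simp only: sum_delta_pairs_left)
  also have "\<dots> = (\<Sum>a<d. \<Sum>b<d. R (b * d + a) (a * d + b))"
    by (rule sum.swap)
  also have "\<dots> = (\<Sum>i<d * d. R (swap_idx d i) i)"
    by (simp add: sum_pair_idx swap_idx_pair)
  finally show ?thesis .
qed

lemma ppt_objective_le_half:
  assumes "ppt_feasible d \<rho> \<sigma>"
  shows "Re (mtrace (P_antisym d * \<sigma>)) \<le> 1/2"
proof -
  have "psd (d * d) \<sigma>" and tr: "mtrace \<sigma> = 1" and "psd (d * d) (partial_transpose d \<sigma>)"
    using assms unfolding ppt_feasible_def by auto
  then have X: "\<sigma> \<in> carrier_mat (d * d) (d * d)"
    and ppt: "psd_form (d * d) (entries (partial_transpose d \<sigma>))"
    by (auto simp: psd_iff_psd_form)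
  define S where "S = (\<Sum>i<d * d. \<sigma> $$ (swap_idx d i, i))"
  have "quad_form (d * d) (entries (partial_transpose d \<sigma>)) (max_entangled d)
      = quad_form (d * d) (ptrans d (entries \<sigma>)) (max_entangled d)"
    by (rule sesq_form_cong) (simp_all add: partial_transpose_entry)
  then have "0 \<le> Re S"
    using ppt unfolding psd_form_def quad_form_ptrans_max_entangled S_def by metis
  have "mtrace (P_antisym d * \<sigma>) = ((\<Sum>i<d * d. \<sigma> $$ (i, i)) - S) / 2"
    unfolding mtrace_P_antisym_mult[OF X] S_def by (simp only: sum_divide_distrib[symmetric] sum_subtractf)
  then have "mtrace (P_antisym d * \<sigma>) = (1 - S) / 2"
    using tr mtrace_carrier[OF X] by simp
  then have "Re (mtrace (P_antisym d * \<sigma>)) = Re ((1 - S) / 2)"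
    by (rule arg_cong)
  with \<open>0 \<le> Re S\<close> show ?thesis by simp
qed

section \<open>The lower bound\<close>

definition ppt_witness :: "nat \<Rightarrow> complex mat \<Rightarrow> complex mat" where
  "ppt_witness d \<rho> = complex_of_real (2 / (real d * (real d + 1) + 2)) \<cdot>\<^sub>m (\<rho> + P_sym d)"

context
  fixes d :: nat and \<rho> :: "complex mat" and p :: real
  assumes state: "is_state (d * d) \<rho>" and antisym: "\<rho> = P_antisym d * \<rho> * P_antisym d"
  defines "p \<equiv> 2 / (real d * (real d + 1) + 2)"
begin

lemma denominator_pos: "0 < real d * (real d + 1) + 2"
  by (simp add: add_nonneg_pos)

lemma p_pos: "0 < p"
  unfolding p_def using denominator_pos by simp

lemma rho_carrier: "\<rho> \<in> carrier_mat (d * d) (d * d)"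
  and rho_psd_form: "psd_form (d * d) (entries \<rho>)"
  and rho_trace: "(\<Sum>i<d * d. \<rho> $$ (i, i)) = 1"
  using state by (auto simp: is_state_def psd_iff_psd_form mtrace_def)

lemma witness_carrier: "ppt_witness d \<rho> \<in> carrier_mat (d * d) (d * d)"
  unfolding ppt_witness_def using rho_carrier P_sym_carrier[of d] by simp

lemma witness_entry:
  "i < d * d \<Longrightarrow> j < d * d \<Longrightarrow> ppt_witness d \<rho> $$ (i, j) = p * (\<rho> $$ (i, j) + P_sym d $$ (i, j))"
  unfolding ppt_witness_def p_def using rho_carrier P_sym_carrier[of d] by simp

lemmas rho_swap_idx = antisym_entry_swap_idx[OF rho_carrier antisym]

lemma witness_objective: "mtrace (P_antisym d * ppt_witness d \<rho>) = p"
proof -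
  have "mtrace (P_antisym d * ppt_witness d \<rho>) = (\<Sum>i<d * d. p * \<rho> $$ (i, i))"
    unfolding mtrace_P_antisym_mult[OF witness_carrier]
    by (intro sum.cong refl)
      (simp add: witness_entry swap_idx_less rho_swap_idx P_sym_swap_idx field_simps)
  then show ?thesis using rho_trace by (simp flip: sum_distrib_left)
qed

lemma witness_constraint:
  "P_antisym d * ppt_witness d \<rho> * P_antisym d = mtrace (P_antisym d * ppt_witness d \<rho>) \<cdot>\<^sub>m \<rho>"
proof (rule eq_matI)
  fix i j assume "i < dim_row (mtrace (P_antisym d * ppt_witness d \<rho>) \<cdot>\<^sub>m \<rho>)"
    "j < dim_col (mtrace (P_antisym d * ppt_witness d \<rho>) \<cdot>\<^sub>m \<rho>)"
  then have i: "i < d * d" and j: "j < d * d" using rho_carrier by auto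
  note sw = swap_idx_less[OF i] swap_idx_less[OF j]
  show "(P_antisym d * ppt_witness d \<rho> * P_antisym d) $$ (i, j)
      = (mtrace (P_antisym d * ppt_witness d \<rho>) \<cdot>\<^sub>m \<rho>) $$ (i, j)"
    unfolding P_antisym_sandwich_entry[OF witness_carrier i j] witness_objective
    using rho_carrier i j sw rho_swap_idx[OF i j] rho_swap_idx[OF i sw(2)]
      P_sym_swap_idx[OF i j] P_sym_swap_idx[OF i sw(2)]
    by (simp add: witness_entry field_simps)
qed (use rho_carrier in auto)

lemma witness_trace: "mtrace (ppt_witness d \<rho>) = 1"
proof -
  have "mtrace (ppt_witness d \<rho>) = p * (1 + (of_nat (d * d) + of_nat d) / 2)"
    unfolding mtrace_carrier[OF witness_carrier]
    using rho_trace by (simp add: witness_entry sum.distrib trace_P_sym flip: sum_distrib_left)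
  also have "\<dots> = 1"
    unfolding p_def using denominator_pos by (simp add: field_simps)
  finally show ?thesis .
qed

lemma witness_psd: "psd (d * d) (ppt_witness d \<rho>)"
  unfolding psd_iff_psd_form psd_form_def
proof (rule conjI[OF witness_carrier], intro allI)
  fix f
  have "quad_form (d * d) (entries (ppt_witness d \<rho>)) f
      = p * (quad_form (d * d) (entries \<rho>) f + quad_form (d * d) (entries (P_sym d)) f)"
    by (subst sesq_form_scale_add[symmetric], rule sesq_form_cong) (simp_all add: witness_entry)
  then show "Im (quad_form (d * d) (entries (ppt_witness d \<rho>)) f) = 0 \<and>
      0 \<le> Re (quad_form (d * d) (entries (ppt_witness d \<rho>)) f)"
    using rho_psd_form psd_form_P_sym p_pos unfolding psd_form_def by simp
qed

lemma witness_ppt: "psd (d * d) (partial_transpose d (ppt_witness d \<rho>))"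
  unfolding psd_iff_psd_form psd_form_def
proof (rule conjI[OF partial_transpose_carrier], intro allI)
  fix f
  have "quad_form (d * d) (entries (partial_transpose d (ppt_witness d \<rho>))) f
      = p * (quad_form (d * d) (ptrans d (entries \<rho>)) f + quad_form (d * d) (ptrans d (entries (P_sym d))) f)"
    by (subst sesq_form_scale_add[symmetric], rule sesq_form_cong)
      (simp_all add: partial_transpose_entry ptrans_def witness_entry mixed_idx_less)
  then show "Im (quad_form (d * d) (entries (partial_transpose d (ppt_witness d \<rho>))) f) = 0 \<and>
      0 \<le> Re (quad_form (d * d) (entries (partial_transpose d (ppt_witness d \<rho>))) f)"
    using quad_form_ptrans_state_ge[OF rho_psd_form rho_trace, of f]
      quad_form_ptrans_P_sym_ge[of d f] p_pos by simp
qed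

lemma ppt_witness_feasible: "ppt_feasible d \<rho> (ppt_witness d \<rho>)"
  unfolding ppt_feasible_def
  using witness_constraint witness_psd witness_trace witness_ppt by blast

end

theorem theorem1:
  fixes d :: nat and \<rho> :: "complex mat"
  assumes "is_state (d*d) \<rho>"
    and "\<rho> = P_antisym d * \<rho> * P_antisym d"
  shows "2 / (real d * (real d + 1) + 2) \<le> p_PPT d \<rho> \<and> p_PPT d \<rho> \<le> 1/2"
proof -
  define S where "S = {Re (mtrace (P_antisym d * \<sigma>)) | \<sigma>. ppt_feasible d \<rho> \<sigma>}"
  have "2 / (real d * (real d + 1) + 2) = Re (mtrace (P_antisym d * ppt_witness d \<rho>))"
    using witness_objective[OF assms] by simp
  then have mem: "2 / (real d * (real d + 1) + 2) \<in> S"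
    unfolding S_def using ppt_witness_feasible[OF assms] by blast
  have ub: "x \<le> 1/2" if "x \<in> S" for x
    using that ppt_objective_le_half unfolding S_def by blast
  then have "2 / (real d * (real d + 1) + 2) \<le> Sup S"
    by (intro cSup_upper[OF mem] bdd_aboveI) blast
  moreover have "Sup S \<le> 1/2"
    using mem ub by (intro cSup_least) auto
  ultimately show ?thesis
    unfolding p_PPT_def S_def by simp
qed

end
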